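(* Let $G$ be a finite connected bipartite graph with bipartition $(X,Y)$ such that for each $k\le\Delta(G)$ every $k$-element subset of $X$ and every $k$-element subset of $Y$ has a common neighbour. Then $G$ is $\mathcal{C}$-$\mathrm{HH}$.
   Context: $\Delta(G)$ is the maximum degree of $G$. A common neighbour of a vertex set $S$ is a vertex adjacent to every vertex of $S$. Subgraphs are induced; a homomorphism maps edges to edges. A graph $G$ is $\mathcal{C}$-$\mathrm{HH}$ if every homomorphism from a finite connected induced subgraph of $G$ into $G$ extends to a homomorphism $G\to G$. *)

theory Defs
  imports Main
begin

definition sgraph :: "'a set \<Rightarrow> ('a \<Rightarrow> 'a \<Rightarrow> bool) \<Rightarrow> bool" where
  "sgraph V E \<longleftrightarrow> (\<forall>u v. E u v \<longrightarrow> u \<in> V \<and> v \<in> V) \<and>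
                   (\<forall>u v. E u v \<longrightarrow> E v u) \<and> (\<forall>v. \<not> E v v)"

definition connected_induced :: "'a set \<Rightarrow> ('a \<Rightarrow> 'a \<Rightarrow> bool) \<Rightarrow> bool" where
  "connected_induced S E \<longleftrightarrow> S \<noteq> {} \<and>
     (\<forall>u\<in>S. \<forall>v\<in>S. (\<lambda>x y. x \<in> S \<and> y \<in> S \<and> E x y)\<^sup>*\<^sup>* u v)"

definition degree :: "'a set \<Rightarrow> ('a \<Rightarrow> 'a \<Rightarrow> bool) \<Rightarrow> 'a \<Rightarrow> nat" where
  "degree V E v = card {w \<in> V. E v w}"

definition max_degree :: "'a set \<Rightarrow> ('a \<Rightarrow> 'a \<Rightarrow> bool) \<Rightarrow> nat" where
  "max_degree V E = Max (degree V E ` V)"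

definition bipartition :: "'a set \<Rightarrow> ('a \<Rightarrow> 'a \<Rightarrow> bool) \<Rightarrow> 'a set \<Rightarrow> 'a set \<Rightarrow> bool" where
  "bipartition V E X Y \<longleftrightarrow> X \<union> Y = V \<and> X \<inter> Y = {} \<and>
     (\<forall>u v. E u v \<longrightarrow> (u \<in> X \<and> v \<in> Y) \<or> (u \<in> Y \<and> v \<in> X))"

definition common_neighbour :: "'a set \<Rightarrow> ('a \<Rightarrow> 'a \<Rightarrow> bool) \<Rightarrow> 'a set \<Rightarrow> 'a \<Rightarrow> bool" where
  "common_neighbour V E S w \<longleftrightarrow> w \<in> V \<and> (\<forall>s\<in>S. E w s)"

definition hom_on :: "'a set \<Rightarrow> ('a \<Rightarrow> 'a \<Rightarrow> bool) \<Rightarrow> 'a set \<Rightarrow> ('a \<Rightarrow> 'a \<Rightarrow> bool) \<Rightarrow> ('a \<Rightarrow> 'a) \<Rightarrow> bool" where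
  "hom_on S E W E' f \<longleftrightarrow> f ` S \<subseteq> W \<and> (\<forall>u\<in>S. \<forall>v\<in>S. E u v \<longrightarrow> E' (f u) (f v))"

definition C_HH :: "'a set \<Rightarrow> ('a \<Rightarrow> 'a \<Rightarrow> bool) \<Rightarrow> bool" where
  "C_HH V E \<longleftrightarrow> (\<forall>S f. S \<subseteq> V \<and> finite S \<and> connected_induced S E \<and> hom_on S E V E f \<longrightarrow>
      (\<exists>g. hom_on V E V E g \<and> (\<forall>x\<in>S. g x = f x)))"

end

theory Submission
  imports Defs
begin

text \<open>A homomorphism defined on a connected subgraph either preserves or swaps the two sides
  of the bipartition. Extend it one vertex at a time, keeping that orientation: the
  already mapped neighbours of a new vertex v lie on one side, their images (at most
  \<open>\<Delta>(G)\<close> many) lie on one side, so they have a common neighbour, which necessarily lies on the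
  side that v has to be mapped to.\<close>

definition has_common_neighbours :: "'a set \<Rightarrow> ('a \<Rightarrow> 'a \<Rightarrow> bool) \<Rightarrow> 'a set \<Rightarrow> bool" where
  "has_common_neighbours V E P \<longleftrightarrow>
     (\<forall>A. A \<subseteq> P \<and> finite A \<and> A \<noteq> {} \<and> card A \<le> max_degree V E \<longrightarrow>
        (\<exists>w. common_neighbour V E A w))"

lemma bipartition_swap: "bipartition V E X Y \<Longrightarrow> bipartition V E Y X"
  unfolding bipartition_def by blast

lemma bipartition_edge_iff:
  assumes "bipartition V E X Y" and "E u v"
  shows "u \<in> X \<longleftrightarrow> v \<notin> X"
  using assms unfolding bipartition_def by blast

lemma bipartition_in_other_side:
  assumes "bipartition V E X Y" and "u \<in> V" and "u \<notin> X"
  shows "u \<in> Y"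
  using assms unfolding bipartition_def by blast

lemma degree_le_max_degree:
  assumes "finite V" and "v \<in> V"
  shows "degree V E v \<le> max_degree V E"
  unfolding max_degree_def using assms by simp

lemma hom_on_connected_preserves_or_swaps_sides:
  assumes bp: "bipartition V E X Y" and con: "connected_induced S E" and "S \<subseteq> V"
    and hom: "hom_on S E V E f"
  shows "(f ` (S \<inter> X) \<subseteq> X \<and> f ` (S \<inter> Y) \<subseteq> Y) \<or> (f ` (S \<inter> X) \<subseteq> Y \<and> f ` (S \<inter> Y) \<subseteq> X)"
proof -
  from con obtain s0 where s0: "s0 \<in> S" unfolding connected_induced_def by blast
  have same_side: "(x \<in> X \<longleftrightarrow> f x \<in> X) \<longleftrightarrow> (s0 \<in> X \<longleftrightarrow> f s0 \<in> X)" if "x \<in> S" for x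
  proof -
    have "(\<lambda>x y. x \<in> S \<and> y \<in> S \<and> E x y)\<^sup>*\<^sup>* s0 x"
      using con s0 that unfolding connected_induced_def by blast
    then show ?thesis
    proof (induction rule: rtranclp_induct)
      case (step y z)
      then have "E y z" and "E (f y) (f z)"
        using hom unfolding hom_on_def by auto
      then have "y \<in> X \<longleftrightarrow> z \<notin> X" and "f y \<in> X \<longleftrightarrow> f z \<notin> X"
        using bipartition_edge_iff[OF bp] by blast+
      then show ?case using step.IH by blast
    qed simp
  qed
  have XY: "X \<inter> Y = {}" using bp unfolding bipartition_def by blast
  have other_side: "x \<in> Y \<longleftrightarrow> x \<notin> X" if "x \<in> V" for x
    using that XY bipartition_in_other_side[OF bp] by blast
  have V: "x \<in> V" "f x \<in> V" if "x \<in> S" for x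
    using that \<open>S \<subseteq> V\<close> hom unfolding hom_on_def by auto
  show ?thesis
  proof (cases "s0 \<in> X \<longleftrightarrow> f s0 \<in> X")
    case True
    then have "x \<in> X \<longleftrightarrow> f x \<in> X" if "x \<in> S" for x using same_side that by blast
    then show ?thesis using V other_side by blast
  next
    case False
    then have "x \<in> X \<longleftrightarrow> f x \<notin> X" if "x \<in> S" for x using same_side that by blast
    then show ?thesis using V other_side by blast
  qed
qed

lemma hom_on_insert:
  assumes sg: "sgraph V E" and hom: "hom_on D E V E g" and "v \<notin> D" and "w \<in> V"
    and nbrs: "\<And>u. u \<in> D \<Longrightarrow> E v u \<Longrightarrow> E w (g u)"
  shows "hom_on (insert v D) E V E (g(v := w))"
  unfolding hom_on_def
proof (intro conjI ballI impI)
  have sym: "E a b \<Longrightarrow> E b a" and irrefl: "\<not> E a a" for a b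
    using sg unfolding sgraph_def by blast+
  show "(g(v := w)) ` insert v D \<subseteq> V"
    using hom \<open>w \<in> V\<close> unfolding hom_on_def by auto
  fix x y assume "x \<in> insert v D" "y \<in> insert v D" "E x y"
  then consider "x = v" "y \<in> D" | "x \<in> D" "y = v" | "x \<in> D" "y \<in> D"
    using irrefl by blast
  then show "E ((g(v := w)) x) ((g(v := w)) y)"
  proof cases
    case 1
    then show ?thesis using \<open>v \<notin> D\<close> \<open>E x y\<close> nbrs by force
  next
    case 2
    then show ?thesis using \<open>v \<notin> D\<close> \<open>E x y\<close> nbrs sym by force
  next
    case 3
    then show ?thesis using \<open>v \<notin> D\<close> \<open>E x y\<close> hom unfolding hom_on_def by force
  qed
qed

text \<open>The step for a vertex v on the side X that has to be mapped into P; the step for v in Y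
  is the same statement with both bipartitions swapped.\<close>
lemma extend_hom_at_vertex:
  assumes sg: "sgraph V E" and "finite V"
    and bpXY: "bipartition V E X Y" and bpPQ: "bipartition V E P Q"
    and cnQ: "has_common_neighbours V E Q" and "P \<noteq> {}"
    and hom: "hom_on D E V E g" and sides: "g ` (D \<inter> Y) \<subseteq> Q" and "D \<subseteq> V"
    and v: "v \<in> X" "v \<in> V" "v \<notin> D"
  shows "\<exists>w\<in>P. hom_on (insert v D) E V E (g(v := w))"
proof -
  define N where "N = {u \<in> D. E v u}"
  have finite_nbrs: "finite {u \<in> V. E v u}" using \<open>finite V\<close> by simp
  have N_nbrs: "N \<subseteq> {u \<in> V. E v u}" unfolding N_def using \<open>D \<subseteq> V\<close> by blast
  have "N \<subseteq> Y"
    unfolding N_def using \<open>D \<subseteq> V\<close> v bipartition_edge_iff[OF bpXY]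
      bipartition_in_other_side[OF bpXY] by blast
  then have images_in_Q: "g ` N \<subseteq> Q" using sides unfolding N_def by blast
  have "card (g ` N) \<le> card N" by (rule card_image_le) (use N_nbrs finite_nbrs finite_subset in blast)
  also have "\<dots> \<le> degree V E v" unfolding degree_def by (rule card_mono[OF finite_nbrs N_nbrs])
  also have "\<dots> \<le> max_degree V E" using degree_le_max_degree[OF \<open>finite V\<close> \<open>v \<in> V\<close>] .
  finally have card_images: "card (g ` N) \<le> max_degree V E" .
  obtain w where w: "w \<in> P" "w \<in> V" "\<forall>a\<in>g ` N. E w a"
  proof (cases "g ` N = {}")
    case True
    then show ?thesis using that \<open>P \<noteq> {}\<close> bpPQ unfolding bipartition_def by blast
  next
    case False
    have "finite (g ` N)" using N_nbrs finite_nbrs finite_subset by blast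
    then obtain w where "w \<in> V" "\<forall>a\<in>g ` N. E w a"
      using cnQ images_in_Q card_images False
      unfolding has_common_neighbours_def common_neighbour_def by blast
    moreover have "w \<in> P"
      using False images_in_Q \<open>\<forall>a\<in>g ` N. E w a\<close> bipartition_edge_iff[OF bpPQ]
        bpPQ unfolding bipartition_def by blast
    ultimately show ?thesis using that by blast
  qed
  have "hom_on (insert v D) E V E (g(v := w))"
    by (rule hom_on_insert[OF sg hom \<open>v \<notin> D\<close> \<open>w \<in> V\<close>]) (use w(3) N_def in blast)
  then show ?thesis using w(1) by blast
qed

lemma extend_hom_respecting_sides:
  assumes sg: "sgraph V E" and finV: "finite V"
    and bpXY: "bipartition V E X Y" and bpPQ: "bipartition V E P Q"
    and cnP: "has_common_neighbours V E P" and cnQ: "has_common_neighbours V E Q"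
    and PX: "X \<noteq> {} \<Longrightarrow> P \<noteq> {}" and QY: "Y \<noteq> {} \<Longrightarrow> Q \<noteq> {}"
    and hom: "hom_on D E V E f" and sides: "f ` (D \<inter> X) \<subseteq> P" "f ` (D \<inter> Y) \<subseteq> Q"
    and "D \<subseteq> V"
  shows "\<exists>g. hom_on V E V E g \<and> (\<forall>x\<in>D. g x = f x)"
proof -
  have "\<exists>g. hom_on (D \<union> T) E V E g \<and> (\<forall>x\<in>D. g x = f x)
            \<and> g ` ((D \<union> T) \<inter> X) \<subseteq> P \<and> g ` ((D \<union> T) \<inter> Y) \<subseteq> Q"
    if "finite T" "T \<subseteq> V - D" for T
    using that
  proof (induction rule: finite_subset_induct')
    case empty
    then show ?case using hom sides by auto
  next
    case (insert v T)
    then obtain g where hom_g: "hom_on (D \<union> T) E V E g" and agree: "\<forall>x\<in>D. g x = f x"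
      and sides_g: "g ` ((D \<union> T) \<inter> X) \<subseteq> P" "g ` ((D \<union> T) \<inter> Y) \<subseteq> Q"
      by blast
    have v: "v \<in> V" "v \<notin> D \<union> T" and DT: "D \<union> T \<subseteq> V"
      using insert.hyps \<open>D \<subseteq> V\<close> by auto
    have "v \<in> X \<or> v \<in> Y"
      using \<open>v \<in> V\<close> bpXY unfolding bipartition_def by blast
    then obtain w where hom_w: "hom_on (insert v (D \<union> T)) E V E (g(v := w))"
      and "v \<in> X \<Longrightarrow> w \<in> P" and "v \<in> Y \<Longrightarrow> w \<in> Q"
    proof
      assume "v \<in> X"
      then have "v \<notin> Y" and "P \<noteq> {}" using bpXY PX unfolding bipartition_def by blast+
      with \<open>v \<in> X\<close> show thesis
        using extend_hom_at_vertex[OF sg finV bpXY bpPQ cnQ \<open>P \<noteq> {}\<close>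
            hom_g sides_g(2) DT \<open>v \<in> X\<close> v]
          that by blast
    next
      assume "v \<in> Y"
      then have "v \<notin> X" and "Q \<noteq> {}" using bpXY QY unfolding bipartition_def by blast+
      with \<open>v \<in> Y\<close> show thesis
        using extend_hom_at_vertex[OF sg finV bipartition_swap[OF bpXY] bipartition_swap[OF bpPQ]
            cnP \<open>Q \<noteq> {}\<close> hom_g sides_g(1) DT \<open>v \<in> Y\<close> v]
          that by blast
    qed
    have "\<forall>x\<in>D. (g(v := w)) x = f x" using agree v by auto
    moreover have "(g(v := w)) ` ((insert v (D \<union> T)) \<inter> X) \<subseteq> P"
      "(g(v := w)) ` ((insert v (D \<union> T)) \<inter> Y) \<subseteq> Q"
      using sides_g v \<open>v \<in> X \<Longrightarrow> w \<in> P\<close> \<open>v \<in> Y \<Longrightarrow> w \<in> Q\<close> by auto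
    ultimately show ?case using hom_w by (metis Un_insert_right)
  qed
  from this[of "V - D"] finV have "\<exists>g. hom_on (D \<union> (V - D)) E V E g \<and> (\<forall>x\<in>D. g x = f x)"
    by blast
  moreover have "D \<union> (V - D) = V" using \<open>D \<subseteq> V\<close> by blast
  ultimately show ?thesis by simp
qed

lemma has_common_neighboursI:
  assumes "\<And>k A. 1 \<le> k \<Longrightarrow> k \<le> max_degree V E \<Longrightarrow> A \<subseteq> P \<Longrightarrow> card A = k \<Longrightarrow>
             \<exists>w. common_neighbour V E A w"
  shows "has_common_neighbours V E P"
  unfolding has_common_neighbours_def
proof (intro allI impI)
  fix A assume A: "A \<subseteq> P \<and> finite A \<and> A \<noteq> {} \<and> card A \<le> max_degree V E"
  then have "1 \<le> card A" by (simp add: Suc_le_eq card_gt_0_iff)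
  with A show "\<exists>w. common_neighbour V E A w" using assms by blast
qed

theorem lemma5p4:
  fixes V X Y :: "'a set" and E :: "'a \<Rightarrow> 'a \<Rightarrow> bool"
  assumes "sgraph V E" and "finite V" and "connected_induced V E"
    and "bipartition V E X Y"
    and "\<And>k A. 1 \<le> k \<Longrightarrow> k \<le> max_degree V E \<Longrightarrow> A \<subseteq> X \<Longrightarrow> card A = k \<Longrightarrow>
            \<exists>w. common_neighbour V E A w"
    and "\<And>k B. 1 \<le> k \<Longrightarrow> k \<le> max_degree V E \<Longrightarrow> B \<subseteq> Y \<Longrightarrow> card B = k \<Longrightarrow>
            \<exists>w. common_neighbour V E B w"
  shows "C_HH V E"
  unfolding C_HH_def
proof (intro allI impI)
  fix S f assume "S \<subseteq> V \<and> finite S \<and> connected_induced S E \<and> hom_on S E V E f"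
  then have S: "S \<subseteq> V" "connected_induced S E" and hom: "hom_on S E V E f" by auto
  have cnX: "has_common_neighbours V E X" by (rule has_common_neighboursI) (rule assms(5))
  have cnY: "has_common_neighbours V E Y" by (rule has_common_neighboursI) (rule assms(6))
  note extend = extend_hom_respecting_sides[OF assms(1,2,4) _ _ _ _ _ hom _ _ S(1)]
  show "\<exists>g. hom_on V E V E g \<and> (\<forall>x\<in>S. g x = f x)"
    using hom_on_connected_preserves_or_swaps_sides[OF assms(4) S(2,1) hom]
  proof
    assume "f ` (S \<inter> X) \<subseteq> X \<and> f ` (S \<inter> Y) \<subseteq> Y"
    then show ?thesis using extend[OF assms(4) cnX cnY] by blast
  next
    assume swapped: "f ` (S \<inter> X) \<subseteq> Y \<and> f ` (S \<inter> Y) \<subseteq> X"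
    obtain s where "s \<in> S" using S(2) unfolding connected_induced_def by blast
    moreover have "s \<in> X \<or> s \<in> Y" using \<open>s \<in> S\<close> S(1) assms(4) unfolding bipartition_def by blast
    ultimately have "X \<noteq> {}" "Y \<noteq> {}" using swapped by blast+
    then show ?thesis
      using extend[OF bipartition_swap[OF assms(4)] cnY cnX] swapped by blast
  qed
qed

end
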